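(* Let $X$ be a real normed vector space, $Y$ a $\mathbb{Q}$-vector space, $f:X\to Y$, $s\ge1$, $\varepsilon>0$, and $B=\{x\in X:\|x\|_X<\varepsilon\}$. If $\Delta_h^sf(x)=0$ for all $x\in X$ and all $h\in B$, then $\Delta_{h_1h_2\cdots h_s}f(x)=0$ for all $(x,h_1,\dots,h_s)\in X^{s+1}$.
   Context: For $h\in X$, $\Delta_hf(x)=f(x+h)-f(x)$; $\Delta_{h_1h_2\cdots h_s}f(x)=\Delta_{h_1}\left(\Delta_{h_2\cdots h_s}f\right)(x)$ for $s\ge 2$; and $\Delta_h^sf(x)=\sum_{k=0}^s\binom{s}{k}(-1)^{s-k}f(x+kh)$. *)

theory Defs
  imports Complex_Main
begin

definition fdiff :: "'a::real_vector \<Rightarrow> ('a \<Rightarrow> 'b::ab_group_add) \<Rightarrow> 'a \<Rightarrow> 'b" where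
  "fdiff h f x = f (x + h) - f x"

fun fdiffs :: "'a::real_vector list \<Rightarrow> ('a \<Rightarrow> 'b::ab_group_add) \<Rightarrow> 'a \<Rightarrow> 'b" where
  "fdiffs [] f = f"
| "fdiffs (h # hs) f = fdiff h (fdiffs hs f)"

text \<open>s-th power difference: sum_{k=0}^s binom(s,k) (-1)^(s-k) f(x + k h), where the
  integer coefficients act on the Q-vector space Y through its rational scalar multiplication.\<close>
definition fdiff_pow ::
  "(rat \<Rightarrow> 'b::ab_group_add \<Rightarrow> 'b) \<Rightarrow> nat \<Rightarrow> 'a::real_vector \<Rightarrow> ('a \<Rightarrow> 'b) \<Rightarrow> 'a \<Rightarrow> 'b" where
  "fdiff_pow scale s h f x =
     (\<Sum>k = 0..s. scale (of_nat (s choose k) * (-1) ^ (s - k)) (f (x + of_nat k *\<^sub>R h)))"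

end

theory Submission
  imports Defs "HOL-Analysis.Product_Vector"
begin

(*
  Proof idea.  The differences Delta_{h_1 ... h_s} f are first shown to vanish when the
  steps are small (sum of norms < eps), and then for arbitrary steps.

  Consider F(beta, alpha) = Delta_alpha^s f(x + beta) on the product space X x X.
  It vanishes wherever norm alpha < eps.  Take the mixed difference of F with the steps
  (h_i, -h_i/i), i = 1..s: since F vanishes on a slab {norm alpha <= r} containing all the
  relevant points, the result is 0.  Expanding Delta_alpha^s as a binomial sum and using that
  differences commute with linear substitutions, the k-th summand is a difference of f with
  steps h_i - (k/i) h_i; for 1 <= k <= s the step with i = k is 0, so only the summand
  k = 0 survives, which is (-1)^s Delta_{h_1 ... h_s} f(x).  Hence that difference is 0.

  Arbitrary steps.  If all differences with s small steps vanish, then Delta_{h_2 ... h_s} f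
  has every small vector as a period, hence every vector (by subdividing); inducting on s
  gives the claim.
*)

lemma fdiffs_shift: "fdiffs hs (\<lambda>y. g (y + c)) x = fdiffs hs g (x + c)"
  by (induction hs arbitrary: x) (simp_all add: fdiff_def add_ac)

lemma fdiffs_zero_step: "0 \<in> set hs \<Longrightarrow> fdiffs hs g x = 0"
proof (induction hs arbitrary: x)
  case (Cons h hs)
  then show ?case
    by (cases "h = 0") (auto simp: fdiff_def)
qed simp

lemma fdiffs_sum: "fdiffs hs (\<lambda>y. \<Sum>k\<in>K. G k y) x = (\<Sum>k\<in>K. fdiffs hs (G k) x)"
  by (induction hs arbitrary: x) (simp_all add: fdiff_def sum_subtractf)

lemma fdiffs_scale:
  assumes "vector_space qscale"
  shows "fdiffs hs (\<lambda>y. qscale c (F y)) x = qscale c (fdiffs hs F x)"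
proof -
  interpret V: vector_space qscale by fact
  show ?thesis
    by (induction hs arbitrary: x) (simp_all add: fdiff_def V.scale_right_diff_distrib)
qed

lemma fdiffs_additive_comp:
  assumes add: "\<And>u v. L (u + v) = L u + L v"
  shows "fdiffs hs (\<lambda>z. g (L z)) x = fdiffs (map L hs) g (L x)"
  by (induction hs arbitrary: x) (simp_all add: fdiff_def add)

lemma fdiffs_fdiff_comm: "fdiff h (fdiffs hs F) = fdiffs hs (fdiff h F)"
proof -
  have comm: "fdiff h (fdiff k G) = fdiff k (fdiff h G)" for k and G :: "'a \<Rightarrow> 'b"
    by (rule ext) (simp add: fdiff_def algebra_simps)
  show ?thesis
    by (induction hs) (simp_all add: comm)
qed

text \<open>A difference at x only sees the values at x plus partial sums of the steps.\<close>
lemma fdiffs_vanish_on_slab: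
  fixes hs :: "('a::real_vector \<times> 'b::real_normed_vector) list"
  assumes "\<And>z. norm (snd z - snd x) \<le> (\<Sum>p\<leftarrow>hs. norm (snd p)) \<Longrightarrow> F z = 0"
  shows "fdiffs hs F x = 0"
  using assms
proof (induction hs arbitrary: x)
  case (Cons h hs)
  let ?S = "\<Sum>p\<leftarrow>hs. norm (snd p)"
  have "fdiffs hs F (x + h) = 0"
  proof (rule Cons.IH)
    fix z :: "'a \<times> 'b" assume "norm (snd z - snd (x + h)) \<le> ?S"
    moreover have "norm (snd z - snd x) \<le> norm (snd z - snd (x + h)) + norm (snd h)"
      using norm_triangle_ineq[of "snd z - snd (x + h)" "snd h"] by simp
    ultimately show "F z = 0"
      by (intro Cons.prems) simp
  qed
  moreover have "fdiffs hs F x = 0"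
  proof (rule Cons.IH)
    fix z :: "'a \<times> 'b" assume "norm (snd z - snd x) \<le> ?S"
    then have "norm (snd z - snd x) \<le> norm (snd h) + ?S"
      using norm_ge_zero[of "snd h"] by linarith
    then show "F z = 0"
      by (intro Cons.prems) simp
  qed
  ultimately show ?case
    by (simp add: fdiff_def)
qed simp

lemma fdiffs_of_fdiff_pow:
  fixes ps :: "('a::real_vector \<times> 'a) list"
  assumes "vector_space qscale"
  shows "fdiffs ps (\<lambda>(\<beta>, \<alpha>). fdiff_pow qscale s \<alpha> f (x + \<beta>)) 0
       = (\<Sum>k = 0..s. qscale (of_nat (s choose k) * (-1) ^ (s - k))
                         (fdiffs (map (\<lambda>(a, b). a + real k *\<^sub>R b) ps) f x))"
proof -
  have summand: "fdiffs ps (\<lambda>z. f (x + (fst z + real k *\<^sub>R snd z))) 0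
      = fdiffs (map (\<lambda>z. fst z + real k *\<^sub>R snd z) ps) f x" for k :: nat
  proof -
    let ?L = "\<lambda>z. fst z + real k *\<^sub>R snd z :: 'a"
    have "fdiffs ps (\<lambda>z. f (x + ?L z)) 0 = fdiffs ps (\<lambda>z. (\<lambda>y. f (y + x)) (?L z)) 0"
      by (simp add: add_ac)
    also have "\<dots> = fdiffs (map ?L ps) (\<lambda>y. f (y + x)) (?L 0)"
      by (rule fdiffs_additive_comp) (simp add: scaleR_add_right)
    also have "\<dots> = fdiffs (map ?L ps) f x"
      by (simp add: fdiffs_shift)
    finally show ?thesis .
  qed
  show ?thesis
    unfolding fdiff_pow_def case_prod_beta'
    by (simp add: fdiffs_sum fdiffs_scale[OF assms] summand add.assoc)
qed

text \<open>The steps (h_i, -h_i/i) (indices counted from 1), chosen so that a + k b has a zero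
  entry for every 1 <= k <= s.\<close>
definition cancelling_steps :: "'a::real_vector list \<Rightarrow> ('a \<times> 'a) list" where
  "cancelling_steps hs = map (\<lambda>i. (hs ! i, - (1 / (real i + 1)) *\<^sub>R hs ! i)) [0..<length hs]"

lemma cancelling_steps_base: "map (\<lambda>(a, b). a + real 0 *\<^sub>R b) (cancelling_steps hs) = hs"
  by (simp add: cancelling_steps_def o_def map_nth)

lemma cancelling_steps_zero:
  assumes "1 \<le> k" and "k \<le> length hs"
  shows "0 \<in> set (map (\<lambda>(a, b). a + real k *\<^sub>R b) (cancelling_steps hs))"
proof -
  let ?steps = "map (\<lambda>(a, b). a + real k *\<^sub>R b) (cancelling_steps hs)"
  have "real (k - 1) + 1 = real k"
    using assms(1) by (simp add: of_nat_diff)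
  then have "?steps ! (k - 1) = hs ! (k - 1) - (real k / real k) *\<^sub>R hs ! (k - 1)"
    using assms by (simp add: cancelling_steps_def)
  also have "\<dots> = 0"
    using assms(1) by simp
  finally have zero: "?steps ! (k - 1) = 0" .
  have "k - 1 < length ?steps"
    using assms by (simp add: cancelling_steps_def)
  then have "?steps ! (k - 1) \<in> set ?steps"
    by (rule nth_mem)
  then show ?thesis
    by (simp only: zero)
qed

lemma cancelling_steps_norm:
  fixes hs :: "'a::real_normed_vector list"
  shows "(\<Sum>p\<leftarrow>cancelling_steps hs. norm (snd p)) \<le> (\<Sum>h\<leftarrow>hs. norm h)"
proof -
  have "(\<Sum>p\<leftarrow>cancelling_steps hs. norm (snd p))
      = (\<Sum>i\<leftarrow>[0..<length hs]. norm (hs ! i) / (real i + 1))"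
    unfolding cancelling_steps_def map_map by (simp add: o_def)
  also have "\<dots> \<le> (\<Sum>i\<leftarrow>[0..<length hs]. norm (hs ! i))"
  proof (rule sum_list_mono)
    fix i :: nat
    show "norm (hs ! i) / (real i + 1) \<le> norm (hs ! i)"
      using divide_left_mono[of 1 "real i + 1" "norm (hs ! i)"] by simp
  qed
  also have "map (\<lambda>i. norm (hs ! i)) [0..<length hs] = map norm hs"
    by (rule nth_equalityI) simp_all
  finally show ?thesis .
qed

lemma fdiffs_vanish_small_steps:
  fixes qscale :: "rat \<Rightarrow> 'b::ab_group_add \<Rightarrow> 'b"
    and f :: "'a::real_normed_vector \<Rightarrow> 'b"
  assumes vs: "vector_space qscale" and len: "length hs = s"
    and hyp: "\<And>x \<alpha>. norm \<alpha> < \<epsilon> \<Longrightarrow> fdiff_pow qscale s \<alpha> f x = 0"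
    and small: "(\<Sum>h\<leftarrow>hs. norm h) < \<epsilon>"
  shows "fdiffs hs f x = 0"
proof -
  interpret V: vector_space qscale by fact
  define ps where "ps = cancelling_steps hs"
  define c where "c = (\<lambda>k. of_nat (s choose k) * (-1) ^ (s - k) :: rat)"
  have "fdiffs ps (\<lambda>(\<beta>, \<alpha>). fdiff_pow qscale s \<alpha> f (x + \<beta>)) 0 = 0"
  proof (rule fdiffs_vanish_on_slab)
    fix z :: "'a \<times> 'a" assume "norm (snd z - snd 0) \<le> (\<Sum>p\<leftarrow>ps. norm (snd p))"
    then have "norm (snd z) < \<epsilon>"
      using cancelling_steps_norm[of hs] small by (simp add: ps_def)
    then show "(case z of (\<beta>, \<alpha>) \<Rightarrow> fdiff_pow qscale s \<alpha> f (x + \<beta>)) = 0"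
      by (simp add: case_prod_beta' hyp)
  qed
  also have "fdiffs ps (\<lambda>(\<beta>, \<alpha>). fdiff_pow qscale s \<alpha> f (x + \<beta>)) 0
      = (\<Sum>k = 0..s. qscale (c k) (fdiffs (map (\<lambda>(a, b). a + real k *\<^sub>R b) ps) f x))"
    unfolding c_def by (rule fdiffs_of_fdiff_pow[OF vs])
  also have "\<dots> = qscale (c 0) (fdiffs hs f x)"
    using len cancelling_steps_zero[of _ hs] cancelling_steps_base[of hs]
    by (simp add: sum.atLeast_Suc_atMost ps_def fdiffs_zero_step)
  finally have "qscale (c 0) (qscale (c 0) (fdiffs hs f x)) = 0"
    by simp
  moreover have "c 0 * c 0 = 1"
    by (simp add: c_def flip: power_add)
  ultimately show ?thesis
    by simp
qed

text \<open>A function having every vector of norm < delta as a period is constant along all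
  translations: split an arbitrary translation into N small equal pieces.\<close>
lemma small_periods_imp_periodic:
  fixes H :: "'a::real_normed_vector \<Rightarrow> 'b"
  assumes "\<delta> > 0" and period: "\<And>x k. norm k < \<delta> \<Longrightarrow> H (x + k) = H x"
  shows "H (x + k) = H x"
proof -
  obtain N :: nat where N: "norm k / \<delta> < real N"
    using reals_Archimedean2 by blast
  then have N_pos: "real N > 0"
    using assms(1) by (smt (verit) divide_nonneg_pos norm_ge_zero)
  define k' where "k' = (1 / real N) *\<^sub>R k"
  have "norm k' < \<delta>"
    using N N_pos assms(1) by (simp add: k'_def field_simps)
  then have multiples: "H (x + real m *\<^sub>R k') = H x" for m
  proof (induction m)
    case (Suc m)
    have "H (x + real (Suc m) *\<^sub>R k') = H ((x + real m *\<^sub>R k') + k')"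
      by (simp add: algebra_simps)
    also have "\<dots> = H (x + real m *\<^sub>R k')"
      using Suc.prems by (rule period)
    finally show ?case
      using Suc by simp
  qed simp
  have "real N *\<^sub>R k' = k"
    using N_pos by (simp add: k'_def)
  then show ?thesis
    using multiples[of N] by simp
qed

text \<open>Induction on the number of steps: the inner difference has
  all small vectors as periods.\<close>
lemma fdiffs_vanish_from_small_steps:
  fixes hs :: "'a::real_normed_vector list" and F :: "'a \<Rightarrow> 'b::ab_group_add"
  assumes "\<delta> > 0"
    and "\<And>ks y. length ks = length hs \<Longrightarrow> (\<forall>k\<in>set ks. norm k < \<delta>) \<Longrightarrow> fdiffs ks F y = 0"
  shows "fdiffs hs F x = 0"
  using assms(2)
proof (induction hs arbitrary: F x)
  case (Cons h hs)
  have period: "fdiffs hs F (y + k) = fdiffs hs F y" if "norm k < \<delta>" for y k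
  proof -
    have "fdiffs hs (fdiff k F) y = 0"
    proof (rule Cons.IH)
      fix ks :: "'a list" and z assume "length ks = length hs" "\<forall>k\<in>set ks. norm k < \<delta>"
      then have "fdiffs (k # ks) F z = 0"
        using Cons.prems[of "k # ks" z] that by simp
      then show "fdiffs ks (fdiff k F) z = 0"
        by (simp add: fdiffs_fdiff_comm)
    qed
    then show ?thesis
      by (simp add: fdiff_def flip: fdiffs_fdiff_comm)
  qed
  have "fdiffs hs F (x + h) = fdiffs hs F x"
    by (rule small_periods_imp_periodic[OF assms(1) period])
  then show ?case
    by (simp add: fdiff_def)
qed force

theorem theorem5:
  fixes scale :: "rat \<Rightarrow> 'b::ab_group_add \<Rightarrow> 'b"
    and f :: "'a::real_normed_vector \<Rightarrow> 'b"
    and s :: nat and \<epsilon> :: real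
  assumes "vector_space scale"
    and "s \<ge> 1" and "\<epsilon> > 0"
    and "\<forall>x. \<forall>h \<in> {h. norm h < \<epsilon>}. fdiff_pow scale s h f x = 0"
  shows "\<forall>x. \<forall>hs. length hs = s \<longrightarrow> fdiffs hs f x = 0"
proof (intro allI impI)
  fix x and hs :: "'a list" assume len: "length hs = s"
  have \<delta>: "\<epsilon> / real s > 0"
    using assms(2,3) by simp
  show "fdiffs hs f x = 0"
  proof (rule fdiffs_vanish_from_small_steps[OF \<delta>])
    fix ks :: "'a list" and y
    assume ks: "length ks = length hs" "\<forall>k\<in>set ks. norm k < \<epsilon> / real s"
    then have "(\<Sum>k\<leftarrow>ks. norm k) < (\<Sum>k\<leftarrow>ks. \<epsilon> / real s)"
      using assms(2) len by (intro sum_list_strict_mono) auto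
    also have "\<dots> = \<epsilon>"
      using ks(1) len assms(2) by (simp add: sum_list_triv)
    finally have small: "(\<Sum>k\<leftarrow>ks. norm k) < \<epsilon>" .
    have "length ks = s"
      using ks(1) len by simp
    then show "fdiffs ks f y = 0"
      by (rule fdiffs_vanish_small_steps[OF assms(1) _ _ small]) (use assms(4) in simp)
  qed
qed

end
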